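(* Let $\gamma\in[0,1]$ and let $(\gamma_n)$ be a $[0,1]$-valued sequence with $|\gamma_n-\gamma|=O(1/n)$. Then for every $u\in(0,1)$, $\lim_{n\to\infty}\phi_{n,\gamma_n}(u)=\tfrac12\mathbf 1_{\{\gamma\}}(u)+\mathbf 1_{(\gamma,1]}(u)$, and $\lim_{n\to\infty}\phi_{n,\gamma_n}'(u)$ equals $0$ if $u\ne\gamma$ and $+\infty$ if $u=\gamma$.
   Context: $[x]$ is the integer part. $\phi_{n,\alpha}(t)=\sum_{j=1+[(n-1)\alpha]}^n\binom{n}{j}t^j(1-t)^{n-j}$, $t\in[0,1]$. $\mathbf 1_A$ is the indicator of $A$. *)

theory Defs
  imports "HOL-Analysis.Analysis" "HOL-Library.Landau_Symbols"
begin

definition phi :: "nat \<Rightarrow> real \<Rightarrow> real \<Rightarrow> real" where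
  "phi n \<alpha> t = (\<Sum>j = nat (1 + \<lfloor>(real n - 1) * \<alpha>\<rfloor>)..n.
      real (n choose j) * t ^ j * (1 - t) ^ (n - j))"

end

theory Submission
  imports Defs "HOL-Probability.Probability" "HOL-Real_Asymp.Real_Asymp"
begin

(* With k = 1 + [(n-1) g n], phi n (g n) u = P(Bin(n,u) >= k) and its derivative is
   n P(Bin(n-1,u) = k-1); the hypothesis on g says k = n gamma + O(1).
   For u <> gamma the threshold lies a linear distance from the mean n u, so Hoeffding's
   inequality makes both the tail deficit and n times the point mass exponentially small.
   For u = gamma the threshold is within O(1) of the mean: the central limit theorem gives
   the limit 1/2, and it also puts probability bounded below on each side of the threshold
   within a window of width sqrt n; since the binomial pmf is unimodal, the point mass at
   the threshold is at least of order 1/sqrt n, so the derivative grows like sqrt n. *)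

section \<open>Binomial tails\<close>

definition binomial_tail :: "nat \<Rightarrow> nat \<Rightarrow> real \<Rightarrow> real" where
  "binomial_tail n k t = (\<Sum>j = k..n. real (n choose j) * t ^ j * (1 - t) ^ (n - j))"

definition binomial_tail_deriv :: "nat \<Rightarrow> nat \<Rightarrow> real \<Rightarrow> real" where
  "binomial_tail_deriv n k t =
     (if 1 \<le> k \<and> k \<le> n
      then real n * real ((n - 1) choose (k - 1)) * t ^ (k - 1) * (1 - t) ^ (n - k) else 0)"

lemma has_real_derivative_binomial_term:
  assumes "1 \<le> k" "k < n"
  shows "((\<lambda>t. real (n choose k) * t ^ k * (1 - t) ^ (n - k)) has_real_derivative
           binomial_tail_deriv n k t - binomial_tail_deriv n (Suc k) t) (at t)"
proof -
  obtain a b where a: "k = Suc a" and b: "n - k = Suc b"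
    using assms by (metis Suc_diff_Suc not0_implies_Suc not_one_le_zero)
  have "(n choose k) * Suc a = n * ((n - 1) choose (k - 1))"
    using times_binomial_minus1_eq[of k n] a by (simp add: mult.commute)
  then have left: "real (n choose k) * real (Suc a) = real n * real ((n - 1) choose (k - 1))"
    by (metis of_nat_mult)
  have "(n choose k) * Suc b = n * ((n - 1) choose k)"
    using binomial_absorb_comp[of n k] b by (simp add: mult.commute)
  then have right: "real (n choose k) * real (Suc b) = real n * real ((n - 1) choose k)"
    by (metis of_nat_mult)
  have "((\<lambda>t. real (n choose k) * t ^ Suc a * (1 - t) ^ Suc b) has_real_derivative
      real (n choose k) * real (Suc a) * t ^ a * (1 - t) ^ Suc b
      - real (n choose k) * real (Suc b) * t ^ Suc a * (1 - t) ^ b) (at t)"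
    by (rule derivative_eq_intros refl | simp)+
  then have "((\<lambda>t. real (n choose k) * t ^ Suc a * (1 - t) ^ Suc b) has_real_derivative
      real n * real ((n - 1) choose (k - 1)) * t ^ a * (1 - t) ^ Suc b
      - real n * real ((n - 1) choose k) * t ^ Suc a * (1 - t) ^ b) (at t)"
    by (simp only: left right)
  moreover have "a = k - 1" "n - Suc k = b"
    using a b by simp_all
  ultimately show ?thesis
    using assms unfolding binomial_tail_deriv_def a[symmetric] b[symmetric] by simp
qed

lemma has_real_derivative_binomial_tail:
  "(binomial_tail n k has_real_derivative binomial_tail_deriv n k t) (at t)"
proof (cases "1 \<le> k \<and> k \<le> n")
  case True
  then have "k \<le> n" "1 \<le> k" by auto
  then show ?thesis
  proof (induction k rule: inc_induct)
    case base
    have "binomial_tail n n = (\<lambda>t. t ^ n)"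
      by (simp add: binomial_tail_def fun_eq_iff)
    then show ?case
      using base by (simp add: binomial_tail_deriv_def DERIV_pow)
  next
    case (step k)
    have "binomial_tail n k =
        (\<lambda>t. real (n choose k) * t ^ k * (1 - t) ^ (n - k) + binomial_tail n (Suc k) t)"
      using step.hyps by (simp add: binomial_tail_def fun_eq_iff sum.atLeast_Suc_atMost)
    moreover have "((\<lambda>t. real (n choose k) * t ^ k * (1 - t) ^ (n - k) + binomial_tail n (Suc k) t)
        has_real_derivative binomial_tail_deriv n k t - binomial_tail_deriv n (Suc k) t
          + binomial_tail_deriv n (Suc k) t) (at t)"
      using step by (intro DERIV_add has_real_derivative_binomial_term step.IH) auto
    ultimately show ?case
      by simp
  qed
next
  case False
  have "binomial_tail n k = (\<lambda>_. if k = 0 then 1 else 0)"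
  proof
    fix t :: real
    have "(t + (1 - t)) ^ n = binomial_tail n 0 t"
      unfolding binomial_ring by (simp add: binomial_tail_def atLeast0AtMost)
    then show "binomial_tail n k t = (if k = 0 then 1 else 0)"
      using False by (auto simp: binomial_tail_def)
  qed
  then show ?thesis
    using False by (auto simp: binomial_tail_deriv_def)
qed

definition phi_index :: "nat \<Rightarrow> real \<Rightarrow> nat" where
  "phi_index n \<alpha> = nat (1 + \<lfloor>(real n - 1) * \<alpha>\<rfloor>)"

lemma phi_eq_binomial_tail: "phi n \<alpha> = binomial_tail n (phi_index n \<alpha>)"
  by (simp add: fun_eq_iff phi_def binomial_tail_def phi_index_def)

lemma deriv_phi: "deriv (phi n \<alpha>) t = binomial_tail_deriv n (phi_index n \<alpha>) t"
  unfolding phi_eq_binomial_tail by (rule DERIV_imp_deriv[OF has_real_derivative_binomial_tail])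

lemma phi_index_bounds:
  assumes "n \<ge> 1" "0 \<le> \<alpha>" "\<alpha> \<le> 1"
  shows "(real n - 1) * \<alpha> < real (phi_index n \<alpha>)" "real (phi_index n \<alpha>) \<le> (real n - 1) * \<alpha> + 1"
    and "1 \<le> phi_index n \<alpha>" "phi_index n \<alpha> \<le> n"
proof -
  define x where "x = (real n - 1) * \<alpha>"
  have "0 \<le> x" "x \<le> real n - 1"
    using assms by (simp_all add: x_def mult_left_le)
  moreover have "real (phi_index n \<alpha>) = 1 + real_of_int \<lfloor>x\<rfloor>"
    using \<open>0 \<le> x\<close> by (simp add: phi_index_def x_def[symmetric])
  ultimately show "(real n - 1) * \<alpha> < real (phi_index n \<alpha>)"
    "real (phi_index n \<alpha>) \<le> (real n - 1) * \<alpha> + 1" "1 \<le> phi_index n \<alpha>" "phi_index n \<alpha> \<le> n"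
    unfolding x_def[symmetric] by linarith+
qed

lemma phi_index_near:
  fixes g :: "nat \<Rightarrow> real"
  assumes "0 \<le> \<gamma>" "\<gamma> \<le> 1" "\<And>n. 0 \<le> g n \<and> g n \<le> 1"
    and "(\<lambda>n. \<bar>g n - \<gamma>\<bar>) \<in> O(\<lambda>n. 1 / real n)"
  obtains B where "\<forall>\<^sub>F n in sequentially. \<bar>real (phi_index n (g n)) - real n * \<gamma>\<bar> \<le> B"
proof -
  obtain C where "\<forall>\<^sub>F n in sequentially. norm \<bar>g n - \<gamma>\<bar> \<le> C * norm (1 / real n)"
    using assms(4) by (elim landau_o.bigE)
  with eventually_ge_at_top[of 1]
  have "\<forall>\<^sub>F n in sequentially. \<bar>real (phi_index n (g n)) - real n * \<gamma>\<bar> \<le> C + 1"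
  proof eventually_elim
    case (elim n)
    have "real n * \<bar>g n - \<gamma>\<bar> \<le> C"
      using elim by (simp add: field_simps)
    then have "\<bar>real n * g n - real n * \<gamma>\<bar> \<le> C"
      by (simp add: abs_mult right_diff_distrib[symmetric])
    moreover have "(real n - 1) * g n < real (phi_index n (g n))"
      "real (phi_index n (g n)) \<le> (real n - 1) * g n + 1"
      using phi_index_bounds[of n "g n"] elim assms(3)[of n] by auto
    ultimately show ?case
      using assms(1,2) assms(3)[of n] by (simp add: algebra_simps abs_le_iff)
  qed
  then show ?thesis
    by (rule that)
qed

definition binomial_cdf :: "nat \<Rightarrow> real \<Rightarrow> real \<Rightarrow> real" where
  "binomial_cdf m p x = measure_pmf.prob (binomial_pmf m p) {j. real j \<le> x}"

lemma binomial_tail_eq_prob: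
  assumes "0 \<le> t" "t \<le> 1"
  shows "binomial_tail n k t = measure_pmf.prob (binomial_pmf n t) {j. k \<le> j}"
proof -
  have "set_pmf (binomial_pmf n t) \<subseteq> {..n}"
    using assms by (auto simp: set_pmf_iff binomial_eq_0)
  then have "{j. k \<le> j} \<inter> set_pmf (binomial_pmf n t) = {k..n} \<inter> set_pmf (binomial_pmf n t)"
    by auto
  then have "measure_pmf.prob (binomial_pmf n t) {j. k \<le> j} = measure_pmf.prob (binomial_pmf n t) {k..n}"
    by (metis measure_Int_set_pmf)
  then show ?thesis
    using assms by (simp add: measure_measure_pmf_finite binomial_tail_def)
qed

lemma binomial_tail_eq_one_minus_cdf:
  assumes "0 \<le> t" "t \<le> 1"
  shows "binomial_tail n k t = 1 - binomial_cdf n t (real k - 1)"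
proof -
  have "{j. k \<le> j} = UNIV - {j. real j \<le> real k - 1}"
    by auto
  then show ?thesis
    using assms measure_pmf.prob_compl[of "{j. real j \<le> real k - 1}" "binomial_pmf n t"]
    by (simp add: binomial_tail_eq_prob binomial_cdf_def)
qed

lemma binomial_tail_deriv_eq_pmf:
  assumes "0 \<le> t" "t \<le> 1" "1 \<le> k" "k \<le> n"
  shows "binomial_tail_deriv n k t = real n * pmf (binomial_pmf (n - 1) t) (k - 1)"
  using assms by (simp add: binomial_tail_deriv_def)

section \<open>Thresholds away from the mean\<close>

lemma binomial_cdf_le_exp:
  assumes "0 \<le> p" "p \<le> 1" "0 < m" "0 \<le> \<epsilon>" "x \<le> real m * (p - \<epsilon>)"
  shows "binomial_cdf m p x \<le> exp (-2 * real m * \<epsilon>\<^sup>2)"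
proof -
  have "{j. real j \<le> x} \<subseteq> {j. real j / real m \<le> p - \<epsilon>}"
    using assms by (auto simp: divide_le_eq mult.commute)
  then have "binomial_cdf m p x \<le> measure_pmf.prob (binomial_pmf m p) {j. real j / real m \<le> p - \<epsilon>}"
    unfolding binomial_cdf_def by (intro measure_pmf.finite_measure_mono) auto
  also have "\<dots> \<le> exp (-2 * real m * \<epsilon>\<^sup>2)"
    using binomial_distribution.prob_le' assms by (simp add: binomial_distribution_def)
  finally show ?thesis .
qed

lemma binomial_upper_tail_le_exp:
  assumes "0 \<le> p" "p \<le> 1" "0 < m" "0 \<le> \<epsilon>" "real m * (p + \<epsilon>) \<le> x"
  shows "measure_pmf.prob (binomial_pmf m p) {j. x \<le> real j} \<le> exp (-2 * real m * \<epsilon>\<^sup>2)"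
proof -
  have "{j. x \<le> real j} \<subseteq> {j. p + \<epsilon> \<le> real j / real m}"
    using assms by (auto simp: le_divide_eq mult.commute)
  then have "measure_pmf.prob (binomial_pmf m p) {j. x \<le> real j}
      \<le> measure_pmf.prob (binomial_pmf m p) {j. p + \<epsilon> \<le> real j / real m}"
    by (intro measure_pmf.finite_measure_mono) auto
  also have "\<dots> \<le> exp (-2 * real m * \<epsilon>\<^sup>2)"
    using binomial_distribution.prob_ge' assms by (simp add: binomial_distribution_def)
  finally show ?thesis .
qed

lemma pmf_le_measure_pmf:
  assumes "x \<in> A"
  shows "pmf M x \<le> measure_pmf.prob M A"
  using assms measure_pmf.finite_measure_mono[of "{x}" A M] by (simp add: measure_pmf_single)

lemma pmf_binomial_le_exp:
  assumes "0 \<le> p" "p \<le> 1" "0 < m" "0 \<le> \<epsilon>" "real m * \<epsilon> \<le> \<bar>real j - real m * p\<bar>"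
  shows "pmf (binomial_pmf m p) j \<le> exp (-2 * real m * \<epsilon>\<^sup>2)"
proof (cases "real j \<le> real m * p")
  case True
  then have "pmf (binomial_pmf m p) j \<le> binomial_cdf m p (real j)"
    unfolding binomial_cdf_def by (intro pmf_le_measure_pmf) simp
  also have "\<dots> \<le> exp (-2 * real m * \<epsilon>\<^sup>2)"
    using assms True by (intro binomial_cdf_le_exp) (auto simp: algebra_simps)
  finally show ?thesis .
next
  case False
  then have "pmf (binomial_pmf m p) j \<le> measure_pmf.prob (binomial_pmf m p) {i. real j \<le> real i}"
    by (intro pmf_le_measure_pmf) simp
  also have "\<dots> \<le> exp (-2 * real m * \<epsilon>\<^sup>2)"
    using assms False by (intro binomial_upper_tail_le_exp) (auto simp: algebra_simps)
  finally show ?thesis .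
qed

lemma binomial_tail_tendsto_one:
  fixes k :: "nat \<Rightarrow> nat"
  assumes "0 \<le> \<gamma>" "\<gamma> < u" "u \<le> 1"
    and near: "\<forall>\<^sub>F n in sequentially. \<bar>real (k n) - real n * \<gamma>\<bar> \<le> B"
  shows "(\<lambda>n. binomial_tail n (k n) u) \<longlonglongrightarrow> 1"
proof -
  define \<epsilon> where "\<epsilon> = (u - \<gamma>) / 2"
  have \<epsilon>: "\<epsilon> > 0" "u - \<epsilon> = \<gamma> + \<epsilon>"
    using assms by (simp_all add: \<epsilon>_def field_simps)
  have "\<forall>\<^sub>F n in sequentially. B \<le> real n * \<epsilon>"
    using \<open>\<epsilon> > 0\<close> by real_asymp
  with near eventually_gt_at_top[of 0]
  have "\<forall>\<^sub>F n in sequentially. norm (binomial_cdf n u (real (k n) - 1)) \<le> exp (-2 * real n * \<epsilon>\<^sup>2)"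
  proof eventually_elim
    case (elim n)
    then have "real (k n) - 1 \<le> real n * (u - \<epsilon>)"
      unfolding \<epsilon> by (simp add: abs_le_iff algebra_simps)
    then have "binomial_cdf n u (real (k n) - 1) \<le> exp (-2 * real n * \<epsilon>\<^sup>2)"
      using assms elim \<open>\<epsilon> > 0\<close> by (intro binomial_cdf_le_exp) auto
    then show ?case
      by (simp add: binomial_cdf_def)
  qed
  moreover have "(\<lambda>n. exp (-2 * real n * \<epsilon>\<^sup>2)) \<longlonglongrightarrow> 0"
    using \<open>\<epsilon> > 0\<close> by real_asymp
  ultimately have "(\<lambda>n. binomial_cdf n u (real (k n) - 1)) \<longlonglongrightarrow> 0"
    by (rule Lim_null_comparison)
  then show ?thesis
    using tendsto_diff[OF tendsto_const, of _ 0 sequentially 1] assms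
    by (simp add: binomial_tail_eq_one_minus_cdf)
qed

lemma binomial_tail_tendsto_zero:
  fixes k :: "nat \<Rightarrow> nat"
  assumes "0 \<le> u" "u < \<gamma>" "\<gamma> \<le> 1"
    and near: "\<forall>\<^sub>F n in sequentially. \<bar>real (k n) - real n * \<gamma>\<bar> \<le> B"
  shows "(\<lambda>n. binomial_tail n (k n) u) \<longlonglongrightarrow> 0"
proof -
  define \<epsilon> where "\<epsilon> = (\<gamma> - u) / 2"
  have \<epsilon>: "\<epsilon> > 0" "u + \<epsilon> = \<gamma> - \<epsilon>"
    using assms by (simp_all add: \<epsilon>_def field_simps)
  have "\<forall>\<^sub>F n in sequentially. B \<le> real n * \<epsilon>"
    using \<open>\<epsilon> > 0\<close> by real_asymp
  with near eventually_gt_at_top[of 0]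
  have "\<forall>\<^sub>F n in sequentially. norm (binomial_tail n (k n) u) \<le> exp (-2 * real n * \<epsilon>\<^sup>2)"
  proof eventually_elim
    case (elim n)
    then have "real n * (u + \<epsilon>) \<le> real (k n)"
      unfolding \<epsilon> by (simp add: abs_le_iff algebra_simps)
    then have "measure_pmf.prob (binomial_pmf n u) {j. real (k n) \<le> real j} \<le> exp (-2 * real n * \<epsilon>\<^sup>2)"
      using assms elim \<open>\<epsilon> > 0\<close> by (intro binomial_upper_tail_le_exp) auto
    then show ?case
      using assms by (simp add: binomial_tail_eq_prob)
  qed
  moreover have "(\<lambda>n. exp (-2 * real n * \<epsilon>\<^sup>2)) \<longlonglongrightarrow> 0"
    using \<open>\<epsilon> > 0\<close> by real_asymp
  ultimately show ?thesis
    by (rule Lim_null_comparison)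
qed

lemma binomial_tail_deriv_tendsto_zero:
  fixes k :: "nat \<Rightarrow> nat"
  assumes "0 \<le> \<gamma>" "\<gamma> \<le> 1" "0 \<le> u" "u \<le> 1" "u \<noteq> \<gamma>"
    and near: "\<forall>\<^sub>F n in sequentially. \<bar>real (k n) - real n * \<gamma>\<bar> \<le> B"
    and range: "\<And>n. n \<ge> 1 \<Longrightarrow> 1 \<le> k n \<and> k n \<le> n"
  shows "(\<lambda>n. binomial_tail_deriv n (k n) u) \<longlonglongrightarrow> 0"
proof -
  define \<epsilon> where "\<epsilon> = \<bar>u - \<gamma>\<bar> / 2"
  have "\<epsilon> > 0"
    using assms by (simp add: \<epsilon>_def)
  have "\<forall>\<^sub>F n in sequentially. B + 1 \<le> (real n - 1) * \<epsilon>"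
    using \<open>\<epsilon> > 0\<close> by real_asymp
  with near eventually_gt_at_top[of 1]
  have "\<forall>\<^sub>F n in sequentially.
      norm (binomial_tail_deriv n (k n) u) \<le> real n * exp (-2 * real (n - 1) * \<epsilon>\<^sup>2)"
  proof eventually_elim
    case (elim n)
    have k: "1 \<le> k n" "k n \<le> n"
      using range elim by auto
    define a where "a = real (k n - 1) - real (n - 1) * \<gamma>"
    define d where "d = real (n - 1) * (\<gamma> - u)"
    have "\<bar>a\<bar> \<le> B + 1"
      using k elim assms by (simp add: a_def of_nat_diff abs_le_iff algebra_simps)
    moreover have "\<bar>d\<bar> = 2 * (real (n - 1) * \<epsilon>)"
      by (simp add: d_def \<epsilon>_def abs_mult abs_minus_commute)
    moreover have "\<bar>d\<bar> \<le> \<bar>a + d\<bar> + \<bar>a\<bar>"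
      using abs_triangle_ineq[of "a + d" "- a"] by simp
    moreover have "real (k n - 1) - real (n - 1) * u = a + d"
      by (simp add: a_def d_def algebra_simps)
    ultimately have "real (n - 1) * \<epsilon> \<le> \<bar>real (k n - 1) - real (n - 1) * u\<bar>"
      using elim by (simp add: of_nat_diff)
    then have "pmf (binomial_pmf (n - 1) u) (k n - 1) \<le> exp (-2 * real (n - 1) * \<epsilon>\<^sup>2)"
      using assms elim \<open>\<epsilon> > 0\<close> by (intro pmf_binomial_le_exp) auto
    then show ?case
      using assms k by (simp add: binomial_tail_deriv_eq_pmf mult_left_mono)
  qed
  moreover have "(\<lambda>n. real n * exp (-2 * real (n - 1) * \<epsilon>\<^sup>2)) \<longlonglongrightarrow> 0"
    using \<open>\<epsilon> > 0\<close> by real_asymp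
  ultimately show ?thesis
    by (rule Lim_null_comparison)
qed

section \<open>The central limit theorem for the binomial distribution\<close>

lemma PiM_measure_pmf_eq_distr_Pi_pmf:
  assumes "finite I"
  shows "PiM I (\<lambda>i. measure_pmf (P i)) =
    distr (Pi_pmf I d P) (PiM I (\<lambda>_. count_space UNIV)) (\<lambda>x. restrict x I)" (is "_ = ?D")
proof (cases "I = {}")
  case True
  have "?D = distr (Pi_pmf {} d P) (count_space {\<lambda>_. undefined}) (\<lambda>x. restrict x {})"
    using True by (intro distr_cong) (auto simp: PiM_empty)
  also have "\<dots> = count_space {\<lambda>_. undefined}"
    by (intro measure_eqI)
      (auto simp: subset_singleton_iff emeasure_distr restrict_def measure_pmf.emeasure_space_1[simplified])
  finally show ?thesis
    using True by (simp add: PiM_empty)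
next
  case False
  have "prob_space.indep_vars (Pi_pmf I d P) (\<lambda>_. count_space UNIV) (\<lambda>x f. f x) I"
    using assms by (rule indep_vars_Pi_pmf)
  then have "?D = PiM I (\<lambda>i. distr (Pi_pmf I d P) (count_space UNIV) (\<lambda>f. f i))"
    using False
    by (subst (asm) prob_space.indep_vars_iff_distr_eq_PiM'[OF measure_pmf.prob_space_axioms]) auto
  also have "\<dots> = PiM I (\<lambda>i. measure_pmf (P i))"
    using assms by (intro PiM_cong refl) (auto simp: map_pmf_rep_eq[symmetric] Pi_pmf_component)
  finally show ?thesis ..
qed

(* The library's central limit theorem needs an infinite i.i.d. sequence, whereas
   binomial_pmf is the count of heads among finitely many coins. *)
lemma distr_count_coins_eq_binomial:
  assumes "0 \<le> p" "p \<le> 1"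
  shows "distr (PiM UNIV (\<lambda>_. measure_pmf (bernoulli_pmf p))) borel
           (\<lambda>\<omega>. \<Sum>i<n. if \<omega> i then 1 else (0::real))
       = distr (binomial_pmf n p) borel real"
proof -
  define B where "B = measure_pmf (bernoulli_pmf p)"
  define \<Omega> where "\<Omega> = PiM (UNIV :: nat set) (\<lambda>_. B)"
  define coins where "coins = Pi_pmf {..<n} False (\<lambda>_. bernoulli_pmf p)"
  define r where "r = (\<lambda>f::nat \<Rightarrow> bool. \<Sum>i<n. if f i then 1 else (0::real))"
  interpret product_prob_space "\<lambda>_::nat. B" UNIV
    unfolding B_def by (intro product_prob_spaceI measure_pmf.prob_space_axioms)
  have [measurable]: "r \<in> borel_measurable (PiM {..<n} (\<lambda>_. B))"
    "r \<in> borel_measurable (PiM {..<n} (\<lambda>_. count_space UNIV))"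
    unfolding r_def B_def by measurable
  have "distr \<Omega> borel r = distr \<Omega> borel (\<lambda>\<omega>. r (restrict \<omega> {..<n}))"
    by (intro distr_cong) (auto simp: r_def)
  also have "\<dots> = distr (distr \<Omega> (PiM {..<n} (\<lambda>_. B)) (\<lambda>\<omega>. restrict \<omega> {..<n})) borel r"
    by (subst distr_distr) (auto simp: \<Omega>_def o_def)
  also have "distr \<Omega> (PiM {..<n} (\<lambda>_. B)) (\<lambda>\<omega>. restrict \<omega> {..<n}) = PiM {..<n} (\<lambda>_. B)"
    unfolding \<Omega>_def by (rule distr_PiM_restrict_finite) auto
  also have "PiM {..<n} (\<lambda>_. B) =
      distr coins (PiM {..<n} (\<lambda>_. count_space UNIV)) (\<lambda>x. restrict x {..<n})"
    unfolding B_def coins_def by (rule PiM_measure_pmf_eq_distr_Pi_pmf) simp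
  also have "distr \<dots> borel r = distr coins borel (\<lambda>f. real (card {i\<in>{..<n}. f i}))"
  proof (subst distr_distr)
    have "r (restrict f {..<n}) = real (card {i\<in>{..<n}. f i})" for f
    proof -
      have "r (restrict f {..<n}) = (\<Sum>i\<in>{i\<in>{..<n}. f i}. 1)"
        unfolding r_def by (intro sum.mono_neutral_cong_right) auto
      then show ?thesis
        by simp
    qed
    then show "distr coins borel (r \<circ> (\<lambda>x. restrict x {..<n})) =
        distr coins borel (\<lambda>f. real (card {i \<in> {..<n}. f i}))"
      by (intro distr_cong) auto
  qed (auto simp: space_PiM)
  also have "\<dots> = distr (map_pmf (\<lambda>f. card {i\<in>{..<n}. f i}) coins) borel real"
    by (simp add: map_pmf_rep_eq distr_distr o_def)
  also have "map_pmf (\<lambda>f. card {i\<in>{..<n}. f i}) coins = binomial_pmf n p"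
    unfolding coins_def by (rule binomial_pmf_altdef'[symmetric]) (use assms in auto)
  finally show ?thesis
    by (simp add: \<Omega>_def B_def r_def)
qed

lemma central_limit_bernoulli_coins:
  fixes p :: real
  defines "coin \<equiv> \<lambda>(i::nat) (\<omega>::nat \<Rightarrow> bool). if \<omega> i then 1 else (0::real)"
  assumes "0 < p" "p < 1"
  shows "weak_conv_m (\<lambda>n. distr (PiM UNIV (\<lambda>_. measure_pmf (bernoulli_pmf p))) borel
            (\<lambda>\<omega>. (\<Sum>i<n. coin i \<omega> - p) / sqrt (real n * (p * (1 - p))))) std_normal_distribution"
proof -
  define B where "B = measure_pmf (bernoulli_pmf p)"
  define M where "M = PiM (UNIV :: nat set) (\<lambda>_. B)"
  define f where "f = (\<lambda>b::bool. if b then 1 else (0::real))"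
  define \<sigma> where "\<sigma> = sqrt (p * (1 - p))"
  interpret prob_space M
    unfolding M_def B_def by (intro prob_space_PiM measure_pmf.prob_space_axioms)
  have coord [measurable]: "(\<lambda>\<omega>. \<omega> i) \<in> measurable M B" for i
    unfolding M_def by (rule measurable_component_singleton) auto
  have coord_distr: "distr M B (\<lambda>\<omega>. \<omega> i) = B" for i
    unfolding M_def by (rule distr_PiM_component) (auto simp: B_def measure_pmf.prob_space_axioms)
  have f [measurable]: "f \<in> borel_measurable B"
    unfolding B_def by simp
  have integral_coord: "integral\<^sup>L M (\<lambda>\<omega>. g (\<omega> i)) = g True * p + g False * (1 - p)"
    for g :: "bool \<Rightarrow> real" and i
  proof -
    have "integral\<^sup>L M (\<lambda>\<omega>. g (\<omega> i)) = integral\<^sup>L (distr M B (\<lambda>\<omega>. \<omega> i)) g"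
      by (subst integral_distr[OF coord]) (auto simp: B_def)
    then show ?thesis
      using assms unfolding coord_distr by (simp add: B_def)
  qed
  have integrable_coord: "integrable M (\<lambda>\<omega>. g (\<omega> i))" for g :: "bool \<Rightarrow> real" and i
  proof -
    have "integrable (distr M B (\<lambda>\<omega>. \<omega> i)) g"
      unfolding coord_distr unfolding B_def by (rule integrable_measure_pmf_finite) simp
    then show ?thesis
      by (subst (asm) integrable_distr_eq[OF coord]) (auto simp: B_def)
  qed
  have "indep_vars (\<lambda>_. B) (\<lambda>i \<omega>. \<omega> i) UNIV"
    by (subst indep_vars_iff_distr_eq_PiM) (simp_all add: coord_distr restrict_UNIV, simp add: M_def)
  then have indep: "indep_vars (\<lambda>_. borel) coin UNIV"
    unfolding coin_def by (rule indep_vars_compose2[where N="\<lambda>_. borel"]) (simp add: B_def)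
  have mean: "expectation (coin i) = p" for i
    using integral_coord[of f i] by (simp add: coin_def f_def)
  have "weak_conv_m (\<lambda>n. distr M borel (\<lambda>\<omega>. (\<Sum>i<n. coin i \<omega> - p) / sqrt (real n * \<sigma>\<^sup>2)))
      std_normal_distribution"
  proof (rule central_limit_theorem[OF indep mean])
    show "0 < \<sigma>"
      using assms by (simp add: \<sigma>_def)
    show "integrable M (\<lambda>\<omega>. (coin i \<omega>)\<^sup>2)" for i
      using integrable_coord[of "\<lambda>b. (f b)\<^sup>2" i] by (simp add: coin_def f_def)
    show "variance (coin i) = \<sigma>\<^sup>2" for i
      unfolding mean using integral_coord[of "\<lambda>b. (f b - p)\<^sup>2" i] assms
      by (simp add: coin_def f_def \<sigma>_def power2_eq_square algebra_simps)
    show "distr M borel (coin i) = distr B borel f" for i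
    proof -
      have "distr M borel (coin i) = distr (distr M B (\<lambda>\<omega>. \<omega> i)) borel f"
        by (subst distr_distr[OF f coord]) (auto simp: coin_def f_def o_def)
      then show ?thesis
        by (simp only: coord_distr)
    qed
  qed
  moreover have "\<sigma>\<^sup>2 = p * (1 - p)"
    using assms by (simp add: \<sigma>_def)
  ultimately show ?thesis
    by (simp add: M_def B_def)
qed

lemma binomial_central_limit:
  assumes "0 < p" "p < 1"
  shows "weak_conv_m (\<lambda>m. distr (binomial_pmf m p) borel
            (\<lambda>k. (real k - real m * p) / sqrt (real m * (p * (1 - p))))) std_normal_distribution"
proof -
  define M where "M = PiM (UNIV :: nat set) (\<lambda>_. measure_pmf (bernoulli_pmf p))"
  define h where "h n s = (s - real n * p) / sqrt (real n * (p * (1 - p)))" for n s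
  have [measurable]: "h n \<in> borel_measurable borel" for n
    unfolding h_def by measurable
  have "distr M borel (\<lambda>\<omega>. (\<Sum>i<n. (if \<omega> i then 1 else 0) - p) / sqrt (real n * (p * (1 - p))))
      = distr (binomial_pmf n p) borel (\<lambda>k. h n (real k))" for n
  proof -
    have "distr M borel (\<lambda>\<omega>. (\<Sum>i<n. (if \<omega> i then 1 else 0) - p) / sqrt (real n * (p * (1 - p))))
        = distr M borel (\<lambda>\<omega>. h n (\<Sum>i<n. if \<omega> i then 1 else 0))"
      by (intro distr_cong) (auto simp: h_def sum_subtractf)
    also have "\<dots> = distr (distr M borel (\<lambda>\<omega>. \<Sum>i<n. if \<omega> i then 1 else 0)) borel (h n)"
      by (subst distr_distr) (auto simp: M_def o_def)
    also have "distr M borel (\<lambda>\<omega>. \<Sum>i<n. if \<omega> i then 1 else 0) = distr (binomial_pmf n p) borel real"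
      unfolding M_def by (rule distr_count_coins_eq_binomial) (use assms in auto)
    also have "distr \<dots> borel (h n) = distr (binomial_pmf n p) borel (\<lambda>k. h n (real k))"
      by (subst distr_distr) (auto simp: o_def)
    finally show ?thesis .
  qed
  then show ?thesis
    using central_limit_bernoulli_coins[OF assms] by (simp add: M_def h_def)
qed

lemma std_normal_distribution_singleton: "measure std_normal_distribution {x} = 0"
proof -
  have "AE z in lborel. z \<in> {x} \<longrightarrow> ennreal (std_normal_density z) = 0"
    using AE_lborel_singleton[of x] by eventually_elim auto
  then have "{x} \<in> null_sets std_normal_distribution"
    by (subst null_sets_density_iff) auto
  then show ?thesis
    by (simp add: measure_def null_setsD1)
qed

lemma isCont_cdf_std_normal: "isCont (cdf std_normal_distribution) x"
  using real_distribution.finite_borel_measure_M[OF real_dist_normal_dist]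
  by (simp add: finite_borel_measure.isCont_cdf std_normal_distribution_singleton)

lemma cdf_std_normal_strict_mono:
  assumes "a < b"
  shows "cdf std_normal_distribution a < cdf std_normal_distribution b"
proof -
  interpret N: real_distribution std_normal_distribution
    by (rule real_dist_normal_dist)
  define c where "c = std_normal_density (\<bar>a\<bar> + \<bar>b\<bar>)"
  have "c > 0"
    unfolding c_def by (simp add: normal_density_pos)
  have density_ge: "c \<le> std_normal_density x" if "x \<in> {a<..b}" for x
  proof -
    have "\<bar>x\<bar> \<le> \<bar>\<bar>a\<bar> + \<bar>b\<bar>\<bar>"
      using that by auto
    then have "x\<^sup>2 \<le> (\<bar>a\<bar> + \<bar>b\<bar>)\<^sup>2"
      by (simp only: abs_le_square_iff)
    then show ?thesis
      unfolding c_def std_normal_density_def by (intro mult_left_mono) auto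
  qed
  have "ennreal c * ennreal (b - a) = (\<integral>\<^sup>+ x. ennreal c * indicator {a<..b} x \<partial>lborel)"
    using assms by (simp add: nn_integral_cmult)
  also have "\<dots> \<le> (\<integral>\<^sup>+ x. ennreal (std_normal_density x) * indicator {a<..b} x \<partial>lborel)"
    by (intro nn_integral_mono) (auto simp: density_ge indicator_def)
  also have "\<dots> = emeasure std_normal_distribution {a<..b}"
    by (subst emeasure_density) auto
  finally have "c * (b - a) \<le> measure std_normal_distribution {a<..b}"
    using \<open>c > 0\<close> assms by (simp add: ennreal_mult[symmetric] N.emeasure_eq_measure ennreal_le_iff)
  moreover have "c * (b - a) > 0"
    using \<open>c > 0\<close> assms by simp
  ultimately show ?thesis
    using N.cdf_diff_eq[OF assms] by simp
qed

lemma cdf_std_normal_zero: "cdf std_normal_distribution 0 = 1 / 2"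
proof -
  interpret N: real_distribution std_normal_distribution
    by (rule real_dist_normal_dist)
  have reflect: "(\<integral>\<^sup>+ x. g x \<partial>lborel) = (\<integral>\<^sup>+ x. g (- x) \<partial>lborel)"
    if [measurable]: "g \<in> borel_measurable borel" for g :: "real \<Rightarrow> ennreal"
  proof -
    have "(\<integral>\<^sup>+ x. g x \<partial>lborel) = (\<integral>\<^sup>+ x. g x \<partial>distr lborel borel uminus)"
      by (simp add: lborel_distr_uminus)
    also have "\<dots> = (\<integral>\<^sup>+ x. g (- x) \<partial>lborel)"
      by (subst nn_integral_distr) auto
    finally show ?thesis .
  qed
  have "emeasure std_normal_distribution {0..} =
      (\<integral>\<^sup>+ x. ennreal (std_normal_density x) * indicator {0..} x \<partial>lborel)"
    by (subst emeasure_density) auto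
  also have "\<dots> = (\<integral>\<^sup>+ x. ennreal (std_normal_density (- x)) * indicator {0..} (- x) \<partial>lborel)"
    by (rule reflect) measurable
  also have "\<dots> = (\<integral>\<^sup>+ x. ennreal (std_normal_density x) * indicator {..0} x \<partial>lborel)"
    by (intro nn_integral_cong) (simp add: std_normal_density_def indicator_def)
  also have "\<dots> = emeasure std_normal_distribution {..0}"
    by (subst emeasure_density) auto
  finally have "measure std_normal_distribution {0..} = measure std_normal_distribution {..0}"
    by (simp add: N.emeasure_eq_measure)
  moreover have "measure std_normal_distribution {0..} =
      measure std_normal_distribution {0<..} + measure std_normal_distribution {0}"
  proof -
    have "{0::real..} = {0<..} \<union> {0}"
      by auto
    then show ?thesis
      using N.finite_measure_Union[of "{0<..}" "{0::real}"] by simp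
  qed
  moreover have "measure std_normal_distribution {..0} + measure std_normal_distribution {0<..} = 1"
  proof -
    have "{..0::real} \<union> {0<..} = UNIV" "{..0::real} \<inter> {0<..} = {}"
      by auto
    then show ?thesis
      using N.prob_space N.finite_measure_Union[of "{..0}" "{0::real<..}"] by simp
  qed
  ultimately show ?thesis
    using std_normal_distribution_singleton by (simp add: cdf_def)
qed

lemma weak_conv_cdf_tendsto:
  fixes x :: "nat \<Rightarrow> real"
  assumes conv: "weak_conv_m \<mu> N" and distr: "\<And>n. real_distribution (\<mu> n)"
    and cont: "\<And>y. isCont (cdf N) y" and lim: "x \<longlonglongrightarrow> x0"
  shows "(\<lambda>n. cdf (\<mu> n) (x n)) \<longlonglongrightarrow> cdf N x0"
proof (rule tendstoI)
  fix \<epsilon> :: real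
  assume "\<epsilon> > 0"
  obtain d where "d > 0" and d: "cdf N (x0 + d) < cdf N x0 + \<epsilon> / 2" "cdf N x0 - \<epsilon> / 2 < cdf N (x0 - d)"
  proof -
    obtain s where "s > 0"
      and s: "\<And>y. y \<noteq> x0 \<and> norm (y - x0) < s \<Longrightarrow> norm (cdf N y - cdf N x0) < \<epsilon> / 2"
      using LIM_D[OF isContD[OF cont[of x0]], of "\<epsilon> / 2"] \<open>\<epsilon> > 0\<close> by auto
    have "\<bar>cdf N (x0 + s / 2) - cdf N x0\<bar> < \<epsilon> / 2" "\<bar>cdf N (x0 - s / 2) - cdf N x0\<bar> < \<epsilon> / 2"
      using s[of "x0 + s / 2"] s[of "x0 - s / 2"] \<open>s > 0\<close> by auto
    then show ?thesis
      using \<open>s > 0\<close> unfolding abs_less_iff by (intro that[of "s / 2"]) linarith+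
  qed
  have "(\<lambda>n. cdf (\<mu> n) y) \<longlonglongrightarrow> cdf N y" for y
    using conv cont unfolding weak_conv_m_def weak_conv_def by auto
  then have "\<forall>\<^sub>F n in sequentially. dist (cdf (\<mu> n) y) (cdf N y) < \<epsilon> / 2" for y
    using \<open>\<epsilon> > 0\<close> by (intro tendstoD) auto
  then have "\<forall>\<^sub>F n in sequentially. dist (cdf (\<mu> n) (x0 + d)) (cdf N (x0 + d)) < \<epsilon> / 2"
    "\<forall>\<^sub>F n in sequentially. dist (cdf (\<mu> n) (x0 - d)) (cdf N (x0 - d)) < \<epsilon> / 2"
    by blast+
  moreover have "\<forall>\<^sub>F n in sequentially. dist (x n) x0 < d"
    using tendstoD[OF lim \<open>d > 0\<close>] .
  ultimately show "\<forall>\<^sub>F n in sequentially. dist (cdf (\<mu> n) (x n)) (cdf N x0) < \<epsilon>"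
  proof eventually_elim
    case (elim n)
    interpret real_distribution "\<mu> n"
      by (rule distr)
    have "cdf (\<mu> n) (x0 - d) \<le> cdf (\<mu> n) (x n)" "cdf (\<mu> n) (x n) \<le> cdf (\<mu> n) (x0 + d)"
      using elim(3) by (auto intro: cdf_nondecreasing simp: dist_real_def)
    then show ?case
      using elim(1,2) d unfolding dist_real_def abs_less_iff by linarith
  qed
qed

lemma binomial_cdf_tendsto_std_normal:
  fixes c :: "nat \<Rightarrow> real"
  assumes p: "0 < p" "p < 1" and lim: "(\<lambda>m. c m / sqrt (real m)) \<longlonglongrightarrow> d"
  shows "(\<lambda>m. binomial_cdf m p (real m * p + c m))
           \<longlonglongrightarrow> cdf std_normal_distribution (d / sqrt (p * (1 - p)))"
proof -
  define \<sigma> where "\<sigma> = sqrt (p * (1 - p))"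
  define \<mu> where "\<mu> = (\<lambda>m. distr (binomial_pmf m p) borel
      (\<lambda>k. (real k - real m * p) / sqrt (real m * (p * (1 - p)))))"
  have "\<sigma> > 0"
    using p by (simp add: \<sigma>_def)
  have clt: "(\<lambda>m. cdf (\<mu> m) (c m / sqrt (real m) / \<sigma>)) \<longlonglongrightarrow> cdf std_normal_distribution (d / \<sigma>)"
  proof (rule weak_conv_cdf_tendsto)
    show "weak_conv_m \<mu> std_normal_distribution"
      unfolding \<mu>_def using p by (rule binomial_central_limit)
    show "real_distribution (\<mu> m)" for m
      unfolding \<mu>_def
      by (rule prob_space.real_distribution_distr) (auto simp: measure_pmf.prob_space_axioms)
    show "(\<lambda>m. c m / sqrt (real m) / \<sigma>) \<longlonglongrightarrow> d / \<sigma>"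
      by (intro tendsto_intros lim) (use \<open>\<sigma> > 0\<close> in auto)
  qed (rule isCont_cdf_std_normal)
  have eq: "cdf (\<mu> m) (c m / sqrt (real m) / \<sigma>) = binomial_cdf m p (real m * p + c m)"
    if "m \<ge> 1" for m
  proof -
    have scale: "sqrt (real m * (p * (1 - p))) = sqrt (real m) * \<sigma>" "sqrt (real m) * \<sigma> > 0"
      using that \<open>\<sigma> > 0\<close> by (simp_all add: \<sigma>_def real_sqrt_mult)
    have "(\<lambda>k. (real k - real m * p) / sqrt (real m * (p * (1 - p)))) -` {..c m / sqrt (real m) / \<sigma>}
        = {k. real k \<le> real m * p + c m}"
      using scale by (auto simp: divide_le_cancel)
    then show ?thesis
      unfolding cdf_def \<mu>_def binomial_cdf_def by (subst measure_distr) auto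
  qed
  show ?thesis
    unfolding \<sigma>_def[symmetric]
    by (rule Lim_transform_eventually[OF clt eventually_sequentiallyI[of 1]]) (rule eq)
qed

section \<open>Unimodality of the binomial distribution\<close>

lemma pmf_binomial_Suc_ratio:
  assumes "0 \<le> p" "p \<le> 1" "i < m"
  shows "pmf (binomial_pmf m p) (Suc i) * (real (Suc i) * (1 - p)) =
         pmf (binomial_pmf m p) i * (real (m - i) * p)"
proof -
  have "(m choose Suc i) * Suc i = (m choose i) * (m - i)"
    using binomial_absorption[of i m] binomial_absorb_comp[of m i] by (simp add: mult.commute)
  then have choose: "real (m choose Suc i) * real (Suc i) = real (m choose i) * real (m - i)"
    by (metis of_nat_mult)
  have "m - i = Suc (m - Suc i)"
    using assms by simp
  have "pmf (binomial_pmf m p) (Suc i) * (real (Suc i) * (1 - p)) =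
      (real (m choose Suc i) * real (Suc i)) * (p * p ^ i) * ((1 - p) ^ (m - Suc i) * (1 - p))"
    using assms by (simp add: algebra_simps)
  also have "\<dots> = (real (m choose i) * real (m - i)) * (p * p ^ i) * (1 - p) ^ (m - i)"
    unfolding choose \<open>m - i = Suc (m - Suc i)\<close> by simp
  also have "\<dots> = pmf (binomial_pmf m p) i * (real (m - i) * p)"
    using assms by (simp add: algebra_simps)
  finally show ?thesis .
qed

lemma pmf_binomial_Suc_le:
  assumes "0 < p" "p < 1" "(real m - real i) * p \<le> (real i + 1) * (1 - p)"
  shows "pmf (binomial_pmf m p) (Suc i) \<le> pmf (binomial_pmf m p) i"
proof (cases "i < m")
  case True
  have "pmf (binomial_pmf m p) (Suc i) * (real (Suc i) * (1 - p))
      = pmf (binomial_pmf m p) i * (real (m - i) * p)"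
    using assms True by (intro pmf_binomial_Suc_ratio) auto
  also have "\<dots> \<le> pmf (binomial_pmf m p) i * (real (Suc i) * (1 - p))"
    using assms True by (intro mult_left_mono) (simp_all add: of_nat_diff add.commute)
  finally show ?thesis
    by (rule mult_right_le_imp_le) (use assms in simp)
next
  case False
  then show ?thesis
    using assms by (simp add: binomial_eq_0)
qed

lemma pmf_binomial_le_Suc:
  assumes "0 < p" "p < 1" "(real i + 1) * (1 - p) \<le> (real m - real i) * p"
  shows "pmf (binomial_pmf m p) i \<le> pmf (binomial_pmf m p) (Suc i)"
proof -
  have "0 < (real i + 1) * (1 - p)"
    using assms by simp
  then have "0 < (real m - real i) * p"
    using assms by linarith
  then have "i < m"
    using assms by (simp add: zero_less_mult_iff)
  have "pmf (binomial_pmf m p) i * (real (Suc i) * (1 - p))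
      \<le> pmf (binomial_pmf m p) i * (real (m - i) * p)"
    using assms \<open>i < m\<close> by (intro mult_left_mono) (simp_all add: of_nat_diff add.commute)
  also have "\<dots> = pmf (binomial_pmf m p) (Suc i) * (real (Suc i) * (1 - p))"
    using assms \<open>i < m\<close> by (intro pmf_binomial_Suc_ratio[symmetric]) auto
  finally show ?thesis
    by (rule mult_right_le_imp_le) (use assms in simp)
qed

lemma pmf_binomial_unimodal:
  assumes "0 < p" "p < 1"
  shows "(\<forall>i\<ge>j. pmf (binomial_pmf m p) i \<le> pmf (binomial_pmf m p) j)
       \<or> (\<forall>i\<le>j. pmf (binomial_pmf m p) i \<le> pmf (binomial_pmf m p) j)"
proof (cases "(real m - real j) * p \<le> (real j + 1) * (1 - p)")
  case True
  have "pmf (binomial_pmf m p) i \<le> pmf (binomial_pmf m p) j" if "j \<le> i" for i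
    using that
  proof (induction i rule: dec_induct)
    case (step i)
    have "(real m - real i) * p \<le> (real m - real j) * p" "(real j + 1) * (1 - p) \<le> (real i + 1) * (1 - p)"
      using step assms by (simp_all add: mult_right_mono)
    then have "pmf (binomial_pmf m p) (Suc i) \<le> pmf (binomial_pmf m p) i"
      using True assms by (intro pmf_binomial_Suc_le) linarith+
    then show ?case
      using step.IH by linarith
  qed simp
  then show ?thesis
    by blast
next
  case False
  have "pmf (binomial_pmf m p) i \<le> pmf (binomial_pmf m p) j" if "i \<le> j" for i
    using that
  proof (induction i rule: inc_induct)
    case (step i)
    have "(real i + 1) * (1 - p) \<le> (real j + 1) * (1 - p)" "(real m - real j) * p \<le> (real m - real i) * p"
      using step assms by (simp_all add: mult_right_mono)
    then have "pmf (binomial_pmf m p) i \<le> pmf (binomial_pmf m p) (Suc i)"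
      using False assms by (intro pmf_binomial_le_Suc) linarith+
    then show ?case
      using step.IH by linarith
  qed simp
  then show ?thesis
    by blast
qed

lemma finite_nat_le_real: "finite {i::nat. real i \<le> x}"
proof (rule finite_subset)
  show "{i::nat. real i \<le> x} \<subseteq> {..nat \<lceil>x\<rceil>}"
    by (auto simp: le_nat_iff) (metis ceiling_mono ceiling_of_nat)
qed simp

lemma card_nat_window:
  assumes "w \<ge> 0"
  shows "real (card {i::nat. a < real i \<and> real i \<le> a + w}) \<le> w + 1"
proof -
  define S where "S = {i::nat. a < real i \<and> real i \<le> a + w}"
  have "finite S"
    by (rule finite_subset[OF _ finite_nat_le_real[of "a + w"]]) (auto simp: S_def)
  show ?thesis
  proof (cases "S = {}")
    case False
    have "card S \<le> card {Min S..Max S}"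
      using \<open>finite S\<close> by (intro card_mono) auto
    moreover have "Min S \<le> Max S"
      using \<open>finite S\<close> False by simp
    ultimately have "real (card S) \<le> real (Max S) + 1 - real (Min S)"
      by (simp add: of_nat_diff)
    moreover have "a < real (Min S)" "real (Max S) \<le> a + w"
      using Min_in[OF \<open>finite S\<close> False] Max_in[OF \<open>finite S\<close> False] by (auto simp: S_def)
    ultimately show ?thesis
      unfolding S_def by linarith
  qed (use assms in \<open>simp add: S_def[symmetric]\<close>)
qed

lemma binomial_cdf_increment_le:
  assumes "w \<ge> 0" "b \<ge> 0"
    and bound: "\<And>i. a < real i \<Longrightarrow> real i \<le> a + w \<Longrightarrow> pmf (binomial_pmf m p) i \<le> b"
  shows "binomial_cdf m p (a + w) - binomial_cdf m p a \<le> (w + 1) * b"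
proof -
  define S where "S = {i::nat. a < real i \<and> real i \<le> a + w}"
  have "finite S"
    by (rule finite_subset[OF _ finite_nat_le_real[of "a + w"]]) (auto simp: S_def)
  have "{i. real i \<le> a + w} - {i. real i \<le> a} = S"
    by (auto simp: S_def)
  then have "binomial_cdf m p (a + w) - binomial_cdf m p a = measure_pmf.prob (binomial_pmf m p) S"
    unfolding binomial_cdf_def using assms
    by (subst measure_pmf.finite_measure_Diff[symmetric]) auto
  also have "\<dots> = (\<Sum>i\<in>S. pmf (binomial_pmf m p) i)"
    using \<open>finite S\<close> by (rule measure_measure_pmf_finite)
  also have "\<dots> \<le> real (card S) * b"
    using bound by (intro sum_bounded_above) (auto simp: S_def)
  also have "\<dots> \<le> (w + 1) * b"
    using card_nat_window[OF \<open>w \<ge> 0\<close>, of a] \<open>b \<ge> 0\<close> by (intro mult_right_mono) (auto simp: S_def)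
  finally show ?thesis .
qed

lemma binomial_cdf_window_le_pmf:
  assumes "0 < p" "p < 1" "w \<ge> 0"
  shows "min (binomial_cdf m p (real j + w) - binomial_cdf m p (real j))
             (binomial_cdf m p (real j) - binomial_cdf m p (real j - w))
         \<le> (w + 1) * pmf (binomial_pmf m p) j"
  using pmf_binomial_unimodal[OF assms(1,2), of j m]
proof
  assume "\<forall>i\<ge>j. pmf (binomial_pmf m p) i \<le> pmf (binomial_pmf m p) j"
  then have "binomial_cdf m p (real j + w) - binomial_cdf m p (real j) \<le> (w + 1) * pmf (binomial_pmf m p) j"
    using assms by (intro binomial_cdf_increment_le) auto
  then show ?thesis
    by linarith
next
  assume "\<forall>i\<le>j. pmf (binomial_pmf m p) i \<le> pmf (binomial_pmf m p) j"
  then have "binomial_cdf m p (real j - w + w) - binomial_cdf m p (real j - w) \<le> (w + 1) * pmf (binomial_pmf m p) j"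
    using assms by (intro binomial_cdf_increment_le) auto
  then show ?thesis
    by simp
qed

section \<open>Thresholds at the mean\<close>

lemma tendsto_div_sqrt_zero:
  assumes "\<forall>\<^sub>F m in sequentially. \<bar>c m\<bar> \<le> C"
  shows "(\<lambda>m. c m / sqrt (real m)) \<longlonglongrightarrow> 0"
proof (rule Lim_null_comparison)
  show "\<forall>\<^sub>F m in sequentially. norm (c m / sqrt (real m)) \<le> C / sqrt (real m)"
    using assms by eventually_elim (simp add: abs_div divide_right_mono)
  show "(\<lambda>m. C / sqrt (real m)) \<longlonglongrightarrow> 0"
    by real_asymp
qed

lemma binomial_tail_tendsto_half:
  fixes k :: "nat \<Rightarrow> nat"
  assumes "0 < p" "p < 1"
    and near: "\<forall>\<^sub>F n in sequentially. \<bar>real (k n) - real n * p\<bar> \<le> B"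
  shows "(\<lambda>n. binomial_tail n (k n) p) \<longlonglongrightarrow> 1 / 2"
proof -
  define c where "c n = real (k n) - 1 - real n * p" for n
  have "\<forall>\<^sub>F n in sequentially. \<bar>c n\<bar> \<le> B + 1"
    using near by eventually_elim (auto simp: c_def)
  then have "(\<lambda>n. binomial_cdf n p (real n * p + c n))
      \<longlonglongrightarrow> cdf std_normal_distribution (0 / sqrt (p * (1 - p)))"
    by (intro binomial_cdf_tendsto_std_normal assms tendsto_div_sqrt_zero)
  then have "(\<lambda>n. 1 - binomial_cdf n p (real n * p + c n)) \<longlonglongrightarrow> 1 - 1 / 2"
    by (intro tendsto_diff) (simp_all add: cdf_std_normal_zero)
  then show ?thesis
    using assms by (simp add: binomial_tail_eq_one_minus_cdf c_def)
qed

lemma binomial_cdf_mass_around_mean: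
  fixes j :: "nat \<Rightarrow> nat"
  assumes "0 < p" "p < 1"
    and near: "\<forall>\<^sub>F m in sequentially. \<bar>real (j m) - real m * p\<bar> \<le> B"
  obtains L where "L > 0"
    "\<forall>\<^sub>F m in sequentially.
       L < min (binomial_cdf m p (real (j m) + sqrt (real m)) - binomial_cdf m p (real (j m)))
               (binomial_cdf m p (real (j m)) - binomial_cdf m p (real (j m) - sqrt (real m)))"
proof -
  define \<sigma> where "\<sigma> = sqrt (p * (1 - p))"
  define \<Phi> where "\<Phi> = cdf std_normal_distribution"
  define F where "F m x = binomial_cdf m p (real (j m) + x * sqrt (real m))" for m x
  define c where "c m = real (j m) - real m * p" for m
  have "(\<lambda>m. c m / sqrt (real m)) \<longlonglongrightarrow> 0"
    using near by (intro tendsto_div_sqrt_zero) (auto simp: c_def)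
  then have "(\<lambda>m. (c m + x * sqrt (real m)) / sqrt (real m)) \<longlonglongrightarrow> x" for x
    by (rule Lim_transform_eventually[OF tendsto_add[OF _ tendsto_const, of _ 0 _ x, simplified]])
      (auto intro: eventually_sequentiallyI[of 1] simp: field_simps)
  then have "(\<lambda>m. binomial_cdf m p (real m * p + (c m + x * sqrt (real m)))) \<longlonglongrightarrow> \<Phi> (x / \<sigma>)" for x
    unfolding \<Phi>_def \<sigma>_def by (rule binomial_cdf_tendsto_std_normal[OF assms(1,2)])
  then have F: "(\<lambda>m. F m x) \<longlonglongrightarrow> \<Phi> (x / \<sigma>)" for x
    by (simp add: F_def c_def)
  define L where "L = min (\<Phi> (1 / \<sigma>) - \<Phi> 0) (\<Phi> 0 - \<Phi> (-1 / \<sigma>))"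
  have "\<sigma> > 0"
    using assms by (simp add: \<sigma>_def)
  then have "L > 0"
    using cdf_std_normal_strict_mono[of 0 "1 / \<sigma>"] cdf_std_normal_strict_mono[of "-1 / \<sigma>" 0]
    by (simp add: L_def \<Phi>_def)
  have "(\<lambda>m. min (F m 1 - F m 0) (F m 0 - F m (-1))) \<longlonglongrightarrow> L"
    unfolding L_def using F[of 1] F[of 0] F[of "-1"] by (intro tendsto_min tendsto_diff) auto
  then have "\<forall>\<^sub>F m in sequentially. L / 2 < min (F m 1 - F m 0) (F m 0 - F m (-1))"
    using \<open>L > 0\<close> by (intro order_tendstoD) auto
  then show ?thesis
    using \<open>L > 0\<close> by (intro that[of "L / 2"]) (simp_all add: F_def)
qed

lemma filterlim_times_pmf_binomial_at_top:
  fixes j :: "nat \<Rightarrow> nat"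
  assumes "0 < p" "p < 1"
    and near: "\<forall>\<^sub>F m in sequentially. \<bar>real (j m) - real m * p\<bar> \<le> B"
  shows "filterlim (\<lambda>m. real m * pmf (binomial_pmf m p) (j m)) at_top sequentially"
proof -
  obtain L where "L > 0" and mass: "\<forall>\<^sub>F m in sequentially.
       L < min (binomial_cdf m p (real (j m) + sqrt (real m)) - binomial_cdf m p (real (j m)))
               (binomial_cdf m p (real (j m)) - binomial_cdf m p (real (j m) - sqrt (real m)))"
    using binomial_cdf_mass_around_mean[OF assms] .
  from mass have "\<forall>\<^sub>F m in sequentially. real m * (L / (sqrt (real m) + 1))
      \<le> real m * pmf (binomial_pmf m p) (j m)"
  proof eventually_elim
    case (elim m)
    then have "L \<le> (sqrt (real m) + 1) * pmf (binomial_pmf m p) (j m)"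
      using binomial_cdf_window_le_pmf[OF assms(1,2) real_sqrt_ge_zero, of m m "j m"] by linarith
    moreover have "sqrt (real m) + 1 > 0"
      by (simp add: add_nonneg_pos)
    ultimately have "L / (sqrt (real m) + 1) \<le> pmf (binomial_pmf m p) (j m)"
      by (simp add: pos_divide_le_eq algebra_simps)
    then show ?case
      by (intro mult_left_mono) auto
  qed
  moreover have "filterlim (\<lambda>m. real m * (L / (sqrt (real m) + 1))) at_top sequentially"
    using \<open>L > 0\<close> by real_asymp
  ultimately show ?thesis
    by (rule filterlim_at_top_mono[rotated])
qed

lemma binomial_tail_deriv_tendsto_at_top:
  fixes k :: "nat \<Rightarrow> nat"
  assumes "0 < p" "p < 1"
    and near: "\<forall>\<^sub>F n in sequentially. \<bar>real (k n) - real n * p\<bar> \<le> B"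
    and range: "\<And>n. n \<ge> 1 \<Longrightarrow> 1 \<le> k n \<and> k n \<le> n"
  shows "filterlim (\<lambda>n. binomial_tail_deriv n (k n) p) at_top sequentially"
proof -
  define j where "j m = k (Suc m) - 1" for m
  have "\<forall>\<^sub>F m in sequentially. \<bar>real (k (Suc m)) - real (Suc m) * p\<bar> \<le> B"
    using near by (rule eventually_sequentially_Suc[THEN iffD2])
  then have "\<forall>\<^sub>F m in sequentially. \<bar>real (j m) - real m * p\<bar> \<le> B + 1"
  proof eventually_elim
    case (elim m)
    have "real (j m) = real (k (Suc m)) - 1"
      using range[of "Suc m"] by (simp add: j_def of_nat_diff)
    then show ?case
      using elim assms by (simp add: abs_le_iff algebra_simps)
  qed
  then have "filterlim (\<lambda>m. real m * pmf (binomial_pmf m p) (j m)) at_top sequentially"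
    by (rule filterlim_times_pmf_binomial_at_top[OF assms(1,2)])
  moreover have "real m * pmf (binomial_pmf m p) (j m) \<le> binomial_tail_deriv (Suc m) (k (Suc m)) p" for m
    using range[of "Suc m"] assms
    by (simp add: binomial_tail_deriv_eq_pmf j_def mult_right_mono)
  ultimately have "filterlim (\<lambda>m. binomial_tail_deriv (Suc m) (k (Suc m)) p) at_top sequentially"
    by (auto intro: filterlim_at_top_mono)
  then show ?thesis
    by (rule filterlim_sequentially_Suc[THEN iffD1])
qed

lemma binomial_tail_limits:
  fixes k :: "nat \<Rightarrow> nat"
  assumes "0 \<le> \<gamma>" "\<gamma> \<le> 1" "0 < u" "u < 1"
    and near: "\<forall>\<^sub>F n in sequentially. \<bar>real (k n) - real n * \<gamma>\<bar> \<le> B"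
    and range: "\<And>n. n \<ge> 1 \<Longrightarrow> 1 \<le> k n \<and> k n \<le> n"
  shows "(\<lambda>n. binomial_tail n (k n) u) \<longlonglongrightarrow> 1/2 * indicator {\<gamma>} u + indicator {\<gamma><..1} u"
    and "u \<noteq> \<gamma> \<Longrightarrow> (\<lambda>n. binomial_tail_deriv n (k n) u) \<longlonglongrightarrow> 0"
    and "u = \<gamma> \<Longrightarrow> filterlim (\<lambda>n. binomial_tail_deriv n (k n) u) at_top sequentially"
proof -
  show "u \<noteq> \<gamma> \<Longrightarrow> (\<lambda>n. binomial_tail_deriv n (k n) u) \<longlonglongrightarrow> 0"
    using assms by (intro binomial_tail_deriv_tendsto_zero[OF _ _ _ _ _ near range]) auto
  show "u = \<gamma> \<Longrightarrow> filterlim (\<lambda>n. binomial_tail_deriv n (k n) u) at_top sequentially"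
    using assms by (auto intro: binomial_tail_deriv_tendsto_at_top[OF _ _ near range])
  show "(\<lambda>n. binomial_tail n (k n) u) \<longlonglongrightarrow> 1/2 * indicator {\<gamma>} u + indicator {\<gamma><..1} u"
  proof (cases rule: linorder_cases[of u \<gamma>])
    case less
    then show ?thesis
      using assms binomial_tail_tendsto_zero[OF _ less _ near] by simp
  next
    case equal
    then show ?thesis
      using assms binomial_tail_tendsto_half[OF _ _ near] by simp
  next
    case greater
    then show ?thesis
      using assms binomial_tail_tendsto_one[OF _ greater _ near] by simp
  qed
qed

theorem proposition3p12:
  fixes \<gamma> :: real and g :: "nat \<Rightarrow> real"
  assumes "0 \<le> \<gamma>" "\<gamma> \<le> 1"
    and "\<And>n. 0 \<le> g n \<and> g n \<le> 1"
    and "(\<lambda>n. \<bar>g n - \<gamma>\<bar>) \<in> O(\<lambda>n. 1 / real n)"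
  shows "\<forall>u \<in> {0<..<1}.
           ((\<lambda>n. phi n (g n) u) \<longlongrightarrow>
              (1/2 * indicator {\<gamma>} u + indicator {\<gamma><..1} u)) sequentially
         \<and> (u \<noteq> \<gamma> \<longrightarrow> ((\<lambda>n. deriv (phi n (g n)) u) \<longlongrightarrow> 0) sequentially)
         \<and> (u = \<gamma> \<longrightarrow> filterlim (\<lambda>n. deriv (phi n (g n)) u) at_top sequentially)"
proof
  fix u :: real
  assume "u \<in> {0<..<1}"
  define k where "k n = phi_index n (g n)" for n
  obtain B where near: "\<forall>\<^sub>F n in sequentially. \<bar>real (k n) - real n * \<gamma>\<bar> \<le> B"
    unfolding k_def using phi_index_near assms by blast
  have range: "1 \<le> k n \<and> k n \<le> n" if "n \<ge> 1" for n
    using phi_index_bounds[OF that, of "g n"] assms(3)[of n] by (simp add: k_def)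
  show "((\<lambda>n. phi n (g n) u) \<longlongrightarrow> (1/2 * indicator {\<gamma>} u + indicator {\<gamma><..1} u)) sequentially
         \<and> (u \<noteq> \<gamma> \<longrightarrow> ((\<lambda>n. deriv (phi n (g n)) u) \<longlongrightarrow> 0) sequentially)
         \<and> (u = \<gamma> \<longrightarrow> filterlim (\<lambda>n. deriv (phi n (g n)) u) at_top sequentially)"
    unfolding deriv_phi unfolding phi_eq_binomial_tail k_def[symmetric]
    using binomial_tail_limits[OF assms(1,2) _ _ near range] \<open>u \<in> {0<..<1}\<close> by simp
qed

end
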